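(* Let $A$ be a finite set with $|A|\ge 2$ and $n\ge 2$. Then $\mathrm{Alt}(A^n)$ is not fast: there exists $g\in\mathrm{Alt}(A^n)$ with $\mathcal{L}(g,\mathrm{Alt}(A^n)\cap\mathcal{I})\ne\mathcal{L}(g,\mathcal{I})$.
   Context: Any $f\in\mathrm{Sym}(A^n)$ is written $f(x)=(f_1(x),\ldots,f_n(x))$ with coordinate functions $f_i:A^n\to A$; the $i$-th coordinate function is trivial if $f_i(x)=x_i$ for all $x$. An instruction is a permutation of $A^n$ with at most one nontrivial coordinate function (the identity counts as an instruction); $\mathcal{I}$ denotes the set of all instructions. For a set $\mathcal{J}\subseteq\mathcal{I}$ and $g\in\mathrm{Sym}(A^n)$, $\mathcal{L}(g,\mathcal{J})$ is the smallest $L$ such that $g=g^{(L)}\circ\cdots\circ g^{(1)}$ with all $g^{(k)}\in\mathcal{J}$ (taken to be $\infty$ if no such expression exists). A subgroup $K\le\mathrm{Sym}(A^n)$ is called fast if $\mathcal{L}(g,K\cap\mathcal{I})=\mathcal{L}(g,\mathcal{I})$ for all $g\in K$. *)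

theory Defs
  imports "HOL-Combinatorics.Permutations" "HOL-Library.Extended_Nat"
begin

text \<open>A^n, represented as the lists of length n with entries in A.\<close>
definition cube :: "'a set \<Rightarrow> nat \<Rightarrow> 'a list set" where
  "cube A n = {x. length x = n \<and> set x \<subseteq> A}"

definition instructions :: "'a set \<Rightarrow> nat \<Rightarrow> ('a list \<Rightarrow> 'a list) set" where
  "instructions A n = {f. f permutes cube A n \<and>
     (\<exists>i<n. \<forall>x\<in>cube A n. \<forall>j<n. j \<noteq> i \<longrightarrow> f x ! j = x ! j)}"

definition alt_group :: "'a set \<Rightarrow> nat \<Rightarrow> ('a list \<Rightarrow> 'a list) set" where
  "alt_group A n = {f. f permutes cube A n \<and> evenperm f}"

text \<open>L(g,J): least length of a composition of elements of J equal to g (infinity if none).\<close>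
definition prog_len :: "('b \<Rightarrow> 'b) \<Rightarrow> ('b \<Rightarrow> 'b) set \<Rightarrow> enat" where
  "prog_len g J = Inf {enat (length gs) | gs. set gs \<subseteq> J \<and> foldr (\<circ>) gs id = g}"

end

theory Submission
  imports Defs
begin

text \<open>
  Let \<open>a \<noteq> b\<close> be letters and \<open>p = (a,a,a,\<dots>)\<close>, \<open>q = (a,b,a,\<dots>)\<close>, \<open>r = (b,a,a,\<dots>)\<close>.
  The 3-cycle \<open>g = (p q r)\<close> is even and equals \<open>(p r) \<circ> (p q)\<close>, a product of two
  transpositions each of which only changes one coordinate; so \<open>L(g, \<I>) \<le> 2\<close>.
  It is not itself an instruction, since it moves coordinate 1 at \<open>p\<close> and coordinate 0 at \<open>q\<close>.
  If \<open>g = h\<^sub>2 \<circ> h\<^sub>1\<close> with instructions \<open>h\<^sub>1, h\<^sub>2\<close> on coordinates \<open>i \<noteq> j\<close>, then \<open>h\<^sub>1\<close> is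
  determined by \<open>g\<close>: it writes the \<open>i\<close>-th coordinate of \<open>g x\<close> into \<open>x\<close>. For \<open>i = 0\<close> this
  map sends both \<open>q\<close> and \<open>s = (b,b,a,\<dots>)\<close> to \<open>s\<close>, so it is not injective; for \<open>i = 1\<close> it is the
  odd transposition \<open>(p q)\<close>. Hence \<open>L(g, Alt \<inter> \<I>) \<ge> 3\<close>.
\<close>

definition changes_only_coord :: "'a set \<Rightarrow> nat \<Rightarrow> nat \<Rightarrow> ('a list \<Rightarrow> 'a list) \<Rightarrow> bool" where
  "changes_only_coord A n i f \<longleftrightarrow> (\<forall>x\<in>cube A n. \<forall>j<n. j \<noteq> i \<longrightarrow> f x ! j = x ! j)"

lemma instructions_iff:
  "f \<in> instructions A n \<longleftrightarrow> f permutes cube A n \<and> (\<exists>i<n. changes_only_coord A n i f)"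
  by (simp add: instructions_def changes_only_coord_def)

lemma changes_only_coordD:
  "changes_only_coord A n i f \<Longrightarrow> x \<in> cube A n \<Longrightarrow> j < n \<Longrightarrow> f x ! j \<noteq> x ! j \<Longrightarrow> j = i"
  unfolding changes_only_coord_def by blast

lemma length_cube: "x \<in> cube A n \<Longrightarrow> length x = n"
  by (simp add: cube_def)

lemma transpose_in_instructions:
  assumes "x \<in> cube A n" "y \<in> cube A n" "i < n" "\<forall>j<n. j \<noteq> i \<longrightarrow> x ! j = y ! j"
  shows "transpose x y \<in> instructions A n"
  unfolding instructions_iff changes_only_coord_def
  using assms by (auto intro: permutes_swap_id simp: transpose_def)

lemma comp_changes_only_coords:
  assumes "h\<^sub>1 permutes cube A n" "changes_only_coord A n i h\<^sub>1" "changes_only_coord A n j h\<^sub>2"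
    and "x \<in> cube A n" "k < n" "k \<noteq> i" "k \<noteq> j"
  shows "(h\<^sub>2 \<circ> h\<^sub>1) x ! k = x ! k"
  using assms permutes_in_image[OF assms(1)] by (simp add: changes_only_coord_def)

text \<open>Since \<open>h\<^sub>2\<close> leaves coordinate \<open>i\<close> alone, the \<open>i\<close>-th coordinate of \<open>h\<^sub>1 x\<close> survives into \<open>(h\<^sub>2 \<circ> h\<^sub>1) x\<close>.\<close>

lemma first_factor_eq_update:
  assumes h\<^sub>1: "h\<^sub>1 permutes cube A n" "changes_only_coord A n i h\<^sub>1"
    and h\<^sub>2: "changes_only_coord A n j h\<^sub>2" and "i \<noteq> j" and x: "x \<in> cube A n"
  shows "h\<^sub>1 x = x[i := (h\<^sub>2 \<circ> h\<^sub>1) x ! i]"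
proof (rule nth_equalityI)
  have h\<^sub>1x: "h\<^sub>1 x \<in> cube A n"
    using permutes_in_image[OF h\<^sub>1(1)] x by blast
  show "length (h\<^sub>1 x) = length (x[i := (h\<^sub>2 \<circ> h\<^sub>1) x ! i])"
    using length_cube[OF x] length_cube[OF h\<^sub>1x] by simp
  fix k assume "k < length (h\<^sub>1 x)"
  then have "k < n" using length_cube[OF h\<^sub>1x] by simp
  then show "h\<^sub>1 x ! k = x[i := (h\<^sub>2 \<circ> h\<^sub>1) x ! i] ! k"
    using h\<^sub>1 h\<^sub>2 \<open>i \<noteq> j\<close> x h\<^sub>1x length_cube[OF x]
    by (cases "k = i") (auto simp: changes_only_coord_def)
qed

lemma prog_len_le:
  "set gs \<subseteq> J \<Longrightarrow> foldr (\<circ>) gs id = g \<Longrightarrow> prog_len g J \<le> enat (length gs)"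
  unfolding prog_len_def by (rule Inf_lower) blast

lemma prog_len_geI:
  assumes "\<And>gs. set gs \<subseteq> J \<Longrightarrow> foldr (\<circ>) gs id = g \<Longrightarrow> k \<le> length gs"
  shows "enat k \<le> prog_len g J"
  unfolding prog_len_def using assms by (auto intro!: Inf_greatest)

locale two_letter_cube =
  fixes A :: "'a set" and n :: nat and a b :: 'a
  assumes a_in: "a \<in> A" and b_in: "b \<in> A" and a_ne_b: "a \<noteq> b" and two_le_n: "2 \<le> n"
begin

definition p :: "'a list" where "p = replicate n a"
definition q :: "'a list" where "q = p[1 := b]"
definition r :: "'a list" where "r = p[0 := b]"
definition s :: "'a list" where "s = p[0 := b, 1 := b]"

definition g :: "'a list \<Rightarrow> 'a list" where "g = transpose p r \<circ> transpose p q"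

lemma points_in_cube: "p \<in> cube A n" "q \<in> cube A n" "r \<in> cube A n" "s \<in> cube A n"
  using a_in b_in unfolding cube_def p_def q_def r_def s_def
  by (auto dest!: set_update_subset_insert[THEN subsetD])

lemma points_nth:
  "p ! 0 = a" "p ! 1 = a" "q ! 0 = a" "q ! 1 = b" "r ! 0 = b" "r ! 1 = a" "s ! 0 = b" "s ! 1 = b"
  using two_le_n unfolding p_def q_def r_def s_def by auto

lemma points_distinct: "p \<noteq> q" "p \<noteq> r" "q \<noteq> r" "q \<noteq> s" "r \<noteq> s" "p \<noteq> s"
  using points_nth a_ne_b by metis+

lemma g_apply: "g p = q" "g q = r" "g r = p" "g s = s"
  using points_distinct unfolding g_def by (auto simp: transpose_def)

lemma g_apply_other: "x \<noteq> p \<Longrightarrow> x \<noteq> q \<Longrightarrow> x \<noteq> r \<Longrightarrow> g x = x"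
  unfolding g_def by (auto simp: transpose_def)

lemma g_in_alt_group: "g \<in> alt_group A n"
proof -
  have "g permutes cube A n"
    unfolding g_def using points_in_cube by (intro permutes_compose permutes_swap_id)
  moreover have "evenperm g"
    unfolding g_def using points_distinct
    by (simp add: evenperm_comp permutation_swap_id evenperm_swap)
  ultimately show ?thesis by (simp add: alt_group_def)
qed

lemma transpose_pq_in_instructions: "transpose p q \<in> instructions A n"
  using points_in_cube two_le_n
  by (intro transpose_in_instructions[where i = 1]) (auto simp: q_def)

lemma transpose_pr_in_instructions: "transpose p r \<in> instructions A n"
  using points_in_cube two_le_n
  by (intro transpose_in_instructions[where i = 0]) (auto simp: r_def)

lemma g_moves_coords: "g p ! 1 \<noteq> p ! 1" "g q ! 0 \<noteq> q ! 0"
  using g_apply points_nth a_ne_b by auto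

lemma g_not_instruction: "g \<notin> instructions A n"
proof
  assume "g \<in> instructions A n"
  then obtain i where g_coord: "changes_only_coord A n i g"
    by (auto simp: instructions_iff)
  have "1 = i" "0 = i"
    using changes_only_coordD[OF g_coord points_in_cube(1) _ g_moves_coords(1)]
      changes_only_coordD[OF g_coord points_in_cube(2) _ g_moves_coords(2)] two_le_n by auto
  then show False by simp
qed

lemma update_at_0_not_injective:
  "q[0 := g q ! 0] = s" "s[0 := g s ! 0] = s"
  using g_apply points_nth by (auto simp: q_def s_def p_def list_update_swap)

lemma update_at_1_eq_transpose_pq:
  assumes "x \<in> cube A n"
  shows "x[1 := g x ! 1] = transpose p q x"
proof -
  have "p[1 := a] = p" "r[1 := a] = r"
    using points_nth by (metis list_update_id)+
  then consider "x = p" | "x = q" | "x = r" | "x \<noteq> p" "x \<noteq> q" "x \<noteq> r"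
    by blast
  then show ?thesis
  proof cases
    case 1
    then show ?thesis using g_apply points_nth by (simp add: q_def)
  next
    case 2
    then show ?thesis using g_apply points_nth \<open>p[1 := a] = p\<close> by (simp add: q_def)
  next
    case 3
    then show ?thesis
      using g_apply points_nth points_distinct \<open>r[1 := a] = r\<close> by (simp add: transpose_def)
  next
    case 4
    then show ?thesis using g_apply_other by (simp add: transpose_def)
  qed
qed

lemma g_ne_even_instruction_comp:
  assumes h\<^sub>1: "h\<^sub>1 \<in> alt_group A n \<inter> instructions A n" and h\<^sub>2: "h\<^sub>2 \<in> instructions A n"
  shows "g \<noteq> h\<^sub>2 \<circ> h\<^sub>1"
proof
  assume g_eq: "g = h\<^sub>2 \<circ> h\<^sub>1"
  obtain i j where h\<^sub>1_perm: "h\<^sub>1 permutes cube A n" and h\<^sub>1_even: "evenperm h\<^sub>1"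
    and h\<^sub>1_coord: "changes_only_coord A n i h\<^sub>1" and h\<^sub>2_coord: "changes_only_coord A n j h\<^sub>2"
    using h\<^sub>1 h\<^sub>2 by (auto simp: alt_group_def instructions_iff)
  have moved: "k = i \<or> k = j" if "x \<in> cube A n" "k < n" "g x ! k \<noteq> x ! k" for x k
    using comp_changes_only_coords[OF h\<^sub>1_perm h\<^sub>1_coord h\<^sub>2_coord that(1,2)] that(3) g_eq
    by metis
  have "1 = i \<or> 1 = j" "0 = i \<or> 0 = j"
    using moved[OF points_in_cube(1) _ g_moves_coords(1)]
      moved[OF points_in_cube(2) _ g_moves_coords(2)] two_le_n by simp_all
  then have "i \<noteq> j" and i_cases: "i = 0 \<or> i = 1"
    by auto
  have h\<^sub>1_eq: "h\<^sub>1 x = x[i := g x ! i]" if "x \<in> cube A n" for x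
    using first_factor_eq_update[OF h\<^sub>1_perm h\<^sub>1_coord h\<^sub>2_coord \<open>i \<noteq> j\<close> that] g_eq
    by simp
  from i_cases show False
  proof
    assume "i = 0"
    then have "h\<^sub>1 q = h\<^sub>1 s"
      using h\<^sub>1_eq[OF points_in_cube(2)] h\<^sub>1_eq[OF points_in_cube(4)] update_at_0_not_injective
      by simp
    then show False
      using permutes_inj[OF h\<^sub>1_perm] points_distinct(4) by (metis injD)
  next
    assume "i = 1"
    have "h\<^sub>1 = transpose p q"
    proof
      fix x
      show "h\<^sub>1 x = transpose p q x"
      proof (cases "x \<in> cube A n")
        case True
        then show ?thesis
          using h\<^sub>1_eq update_at_1_eq_transpose_pq \<open>i = 1\<close> by simp
      next
        case False
        then have "x \<noteq> p" "x \<noteq> q"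
          using points_in_cube by auto
        then show ?thesis
          using permutes_not_in[OF h\<^sub>1_perm False] by simp
      qed
    qed
    then show False
      using h\<^sub>1_even points_distinct(1) by (simp add: evenperm_swap)
  qed
qed

lemma prog_len_instructions_le_2: "prog_len g (instructions A n) \<le> 2"
  using prog_len_le[of "[transpose p r, transpose p q]" "instructions A n" g]
    transpose_pq_in_instructions transpose_pr_in_instructions
  by (simp add: g_def numeral_eq_enat numeral_2_eq_2)

lemma prog_len_alt_instructions_ge_3: "3 \<le> prog_len g (alt_group A n \<inter> instructions A n)"
proof -
  have "3 \<le> length gs"
    if gs: "set gs \<subseteq> alt_group A n \<inter> instructions A n" "foldr (\<circ>) gs id = g" for gs
  proof (rule ccontr)
    assume "\<not> 3 \<le> length gs"
    then have "length gs < 3" by simp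
    then consider "gs = []" | h where "gs = [h]" | h\<^sub>2 h\<^sub>1 where "gs = [h\<^sub>2, h\<^sub>1]"
      by (cases gs; cases "tl gs"; auto)
    then show False
    proof cases
      case 1
      then show False using gs g_apply points_distinct by (metis foldr.simps(1) id_apply)
    next
      case 2
      then show False using gs g_not_instruction by auto
    next
      case 3
      then show False using gs g_ne_even_instruction_comp[of h\<^sub>1 h\<^sub>2] by auto
    qed
  qed
  then show ?thesis
    using prog_len_geI[of "alt_group A n \<inter> instructions A n" g 3] by (simp add: numeral_eq_enat)
qed

end

theorem proposition3:
  fixes A :: "'a set" and n :: nat
  assumes "finite A" and "card A \<ge> 2" and "n \<ge> 2"
  shows "\<exists>g\<in>alt_group A n.
           prog_len g (alt_group A n \<inter> instructions A n) \<noteq> prog_len g (instructions A n)"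
proof -
  obtain a b where "a \<in> A" "b \<in> A" "a \<noteq> b"
    using assms(2) by (auto simp: numeral_2_eq_2 card_le_Suc_iff)
  then interpret two_letter_cube A n a b
    using assms(3) by unfold_locales
  have "prog_len g (alt_group A n \<inter> instructions A n) \<noteq> prog_len g (instructions A n)"
  proof
    assume "prog_len g (alt_group A n \<inter> instructions A n) = prog_len g (instructions A n)"
    then have "(3::enat) \<le> 2"
      using prog_len_instructions_le_2 prog_len_alt_instructions_ge_3 by (metis order_trans)
    then show False by (simp add: numeral_eq_enat)
  qed
  then show ?thesis
    using g_in_alt_group by blast
qed

end
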